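(* The system $\mathrm{CLC}_s$ is strongly normalizing: there is no infinite sequence $t_0\to_s t_1\to_s t_2\to_s\cdots$ of $l$-terms.
   Context: $i$-terms (unlabelled terms) are built from variables and the constants $C,T,F,K,S$ by binary application (left-associative). $\mathrm{CLC}$ is the conditional system with rules $C\,T\,x\,y\to x$; $C\,F\,x\,y\to y$; $C\,z\,x\,y\to x \Leftarrow x=y$; $K\,x\,y\to x$; $S\,x\,y\,z\to x\,z\,(y\,z)$, where $=$ is convertibility in $\mathrm{CLC}$ itself (defined by levels: $R_0$ with empty condition, $R_{n+1}$ with $=$ the conversion of $\to_{R_n}$, $\to_{\mathrm{CLC}}=\bigcup_n\to_{R_n}$); $=_{\mathrm{CLC}}$ is conversion in $\mathrm{CLC}$. Labelled constants: $C_1,C_2,T_1,F_1,K_1$ and $S^{n_0,\dots,n_k}$ for all $k\ge1$, $n_0,\dots,n_k\ge1$. $l$-terms: every $i$-term; every labelled constant; $t_1t_2$ for $l$-terms $t_1,t_2$; and $\langle t_1,\dots,t_n\rangle$ for $l$-terms $t_1,\dots,t_n$ with $n\ge2$ (a tuple of size $n$). Convention: $\langle t\rangle\equiv t$ (not a tuple). Erasures: an $i$-term is an erasure of itself; $C$ is an erasure of $C_1,C_2$; $T$ of $T_1$; $F$ of $F_1$; $K$ of $K_1$; $S$ of each $S^{n_0,\dots,n_k}$; if $q_1,q_2$ are erasures of $t_1,t_2$ then $q_1q_2$ is an erasure of $t_1t_2$; if $q_i$ is an erasure of $t_i$ for some $i$ then $q_i$ is an erasure of $\langle t_1,\dots,t_n\rangle$.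 The leftmost erasure $\lfloor t\rfloor$ always chooses $i=1$ for tuples. $\mathrm{CLC}_s$ is the rewriting system on $l$-terms (variables instantiated by arbitrary $l$-terms, contraction allowed in any context, including inside tuple components) with rules: $C_1T_1xy\to x$; $C_1F_1xy\to y$; $C_2zxy\to x\Leftarrow\lfloor x\rfloor=_{\mathrm{CLC}}\lfloor y\rfloor$; $C_2Txy\to x$; $C_2Fxy\to y$; $C_2T_1xy\to x$; $C_2F_1xy\to y$; $K_1xy\to x$; and, for each $S^{n_0,\dots,n_k}$, $S^{n_0,\dots,n_k}\,x\,\langle y_1,\dots,y_k\rangle\,\langle z_{0,1},\dots,z_{0,n_0},z_{1,1},\dots,z_{1,n_1},\dots,z_{k,1},\dots,z_{k,n_k}\rangle \to x\,\langle z_{0,1},\dots,z_{0,n_0}\rangle\,\langle y_1\langle z_{1,1},\dots,z_{1,n_1}\rangle,\dots,y_k\langle z_{k,1},\dots,z_{k,n_k}\rangle\rangle$ under the condition that $\lfloor z_{i,j}\rfloor=_{\mathrm{CLC}}\lfloor z_{i',j'}\rfloor$ for all index pairs and $\lfloor y_i\rfloor=_{\mathrm{CLC}}\lfloor y_j\rfloor$ for all $i,j$. One-step contraction in $\mathrm{CLC}_s$ is written $\to_s$. *)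

theory Defs
  imports Main
begin

datatype iterm = IVar nat | IC | IT | IF | IK | IS | IApp iterm iterm

inductive clc_root :: "(iterm \<Rightarrow> iterm \<Rightarrow> bool) \<Rightarrow> iterm \<Rightarrow> iterm \<Rightarrow> bool"
  for E where
  cT: "clc_root E (IApp (IApp (IApp IC IT) x) y) x"
| cF: "clc_root E (IApp (IApp (IApp IC IF) x) y) y"
| cEq: "E x y \<Longrightarrow> clc_root E (IApp (IApp (IApp IC z) x) y) x"
| k: "clc_root E (IApp (IApp IK x) y) x"
| s: "clc_root E (IApp (IApp (IApp IS x) y) z) (IApp (IApp x z) (IApp y z))"

inductive ictx :: "(iterm \<Rightarrow> iterm \<Rightarrow> bool) \<Rightarrow> iterm \<Rightarrow> iterm \<Rightarrow> bool"
  for R where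
  root: "R s t \<Longrightarrow> ictx R s t"
| appL: "ictx R s t \<Longrightarrow> ictx R (IApp s u) (IApp t u)"
| appR: "ictx R s t \<Longrightarrow> ictx R (IApp u s) (IApp u t)"

fun clc_level :: "nat \<Rightarrow> iterm \<Rightarrow> iterm \<Rightarrow> bool" where
  "clc_level 0 = ictx (clc_root (\<lambda>_ _. False))"
| "clc_level (Suc n) = ictx (clc_root (equivclp (clc_level n)))"

definition clc_step :: "iterm \<Rightarrow> iterm \<Rightarrow> bool" where
  "clc_step s t \<longleftrightarrow> (\<exists>n. clc_level n s t)"

definition clc_conv :: "iterm \<Rightarrow> iterm \<Rightarrow> bool" where
  "clc_conv = equivclp clc_step"

(* LSl ns represents S^{n_0,...,n_k} with ns = [n_0,...,n_k]; Tup ts is a tuple *)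
datatype lterm = LVar nat | LC | LT | LF | LK | LS
  | LC1 | LC2 | LT1 | LF1 | LK1 | LSl "nat list"
  | LApp lterm lterm | Tup "lterm list"

fun wf_lterm :: "lterm \<Rightarrow> bool" where
  "wf_lterm (LSl ns) = (length ns \<ge> 2 \<and> (\<forall>n\<in>set ns. n \<ge> 1))"
| "wf_lterm (LApp s t) = (wf_lterm s \<and> wf_lterm t)"
| "wf_lterm (Tup ts) = (length ts \<ge> 2 \<and> (\<forall>t\<in>set ts. wf_lterm t))"
| "wf_lterm _ = True"

(* convention <t> = t *)
definition tup :: "lterm list \<Rightarrow> lterm" where
  "tup ts = (case ts of [t] \<Rightarrow> t | _ \<Rightarrow> Tup ts)"

fun lerase :: "lterm \<Rightarrow> iterm" where
  "lerase (LVar v) = IVar v"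
| "lerase LC = IC" | "lerase LT = IT" | "lerase LF = IF" | "lerase LK = IK" | "lerase LS = IS"
| "lerase LC1 = IC" | "lerase LC2 = IC" | "lerase LT1 = IT" | "lerase LF1 = IF"
| "lerase LK1 = IK" | "lerase (LSl ns) = IS"
| "lerase (LApp s t) = IApp (lerase s) (lerase t)"
| "lerase (Tup ts) = (case ts of [] \<Rightarrow> IVar 0 | t # _ \<Rightarrow> lerase t)"

fun split_by :: "nat list \<Rightarrow> 'a list \<Rightarrow> 'a list list" where
  "split_by [] xs = []"
| "split_by (n # ns) xs = take n xs # split_by ns (drop n xs)"

definition ap3 :: "lterm \<Rightarrow> lterm \<Rightarrow> lterm \<Rightarrow> lterm \<Rightarrow> lterm" where
  "ap3 f a b c = LApp (LApp (LApp f a) b) c"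

inductive s_root :: "lterm \<Rightarrow> lterm \<Rightarrow> bool" where
  c1T: "s_root (ap3 LC1 LT1 x y) x"
| c1F: "s_root (ap3 LC1 LF1 x y) y"
| c2Eq: "clc_conv (lerase x) (lerase y) \<Longrightarrow> s_root (ap3 LC2 z x y) x"
| c2T: "s_root (ap3 LC2 LT x y) x"
| c2F: "s_root (ap3 LC2 LF x y) y"
| c2T1: "s_root (ap3 LC2 LT1 x y) x"
| c2F1: "s_root (ap3 LC2 LF1 x y) y"
| k1: "s_root (LApp (LApp LK1 x) y) x"
| sl: "\<lbrakk> ns = n0 # nsr; length nsr \<ge> 1; \<forall>n\<in>set ns. n \<ge> 1;
         length ys = length nsr; length zs = sum_list ns;
         \<forall>a\<in>set zs. \<forall>b\<in>set zs. clc_conv (lerase a) (lerase b);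
         \<forall>a\<in>set ys. \<forall>b\<in>set ys. clc_conv (lerase a) (lerase b);
         gs = split_by ns zs \<rbrakk> \<Longrightarrow>
       s_root (ap3 (LSl ns) x (tup ys) (tup zs))
         (LApp (LApp x (tup (hd gs)))
               (tup (map2 (\<lambda>y g. LApp y (tup g)) ys (tl gs))))"

inductive s_step :: "lterm \<Rightarrow> lterm \<Rightarrow> bool" (infix "\<rightarrow>\<^sub>s" 50) where
  root: "s_root s t \<Longrightarrow> s \<rightarrow>\<^sub>s t"
| appL: "s \<rightarrow>\<^sub>s t \<Longrightarrow> LApp s u \<rightarrow>\<^sub>s LApp t u"
| appR: "s \<rightarrow>\<^sub>s t \<Longrightarrow> LApp u s \<rightarrow>\<^sub>s LApp u t"
| tupc: "s \<rightarrow>\<^sub>s t \<Longrightarrow> Tup (xs @ s # ys) \<rightarrow>\<^sub>s Tup (xs @ t # ys)"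

end

theory Submission
  imports Defs
begin

text \<open>Every rule of \<open>CLC\<^sub>s\<close> erases its head constant, and no rule duplicates a subterm: the
  labelled \<open>S\<close> rule does not copy its third argument but distributes the components of the
  tuple \<open>\<langle>z\<^sub>0\<^sub>,\<^sub>1, \<dots>, z\<^sub>k\<^sub>,\<^sub>n\<^sub>k\<rangle>\<close> among the \<open>y\<^sub>i\<close>. Hence the number of atoms of an \<open>l\<close>-term strictly
  decreases with each step, so there is no infinite reduction.\<close>

fun atoms :: "lterm \<Rightarrow> nat" where
  "atoms (LApp s t) = atoms s + atoms t"
| "atoms (Tup ts) = sum_list (map atoms ts)"
| "atoms _ = 1"

lemma atoms_tup [simp]: "atoms (tup ts) = sum_list (map atoms ts)"
  by (cases ts rule: remdups_adj.cases) (auto simp: tup_def)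

lemma concat_split_by: "concat (split_by ns xs) = take (sum_list ns) xs"
  by (induction ns arbitrary: xs) (auto simp: take_add)

lemma atoms_map2_le:
  "sum_list (map atoms (map2 (\<lambda>y g. LApp y (tup g)) ys gs))
     \<le> sum_list (map atoms ys) + sum_list (map atoms (concat gs))"
proof (induction ys arbitrary: gs)
  case (Cons y ys)
  then show ?case by (cases gs) (auto simp: add_le_mono)
qed simp

lemma s_root_atoms_less: "s_root s t \<Longrightarrow> atoms t < atoms s"
proof (induction rule: s_root.induct)
  case (sl ns n0 nsr ys zs gs x)
  have "concat gs = zs"
    using sl by (simp add: concat_split_by)
  moreover have "gs = hd gs # tl gs"
    using sl by simp
  ultimately have "sum_list (map atoms (hd gs)) + sum_list (map atoms (concat (tl gs)))
      = sum_list (map atoms zs)"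
    by (metis concat.simps(2) map_append sum_list_append)
  with atoms_map2_le[of ys "tl gs"] show ?case
    by (simp add: ap3_def)
qed (auto simp: ap3_def)

lemma s_step_atoms_less: "s \<rightarrow>\<^sub>s t \<Longrightarrow> atoms t < atoms s"
  by (induction rule: s_step.induct) (auto simp: s_root_atoms_less)

lemma wf_s_step: "wf {(t, s). s \<rightarrow>\<^sub>s t}"
  by (rule wf_subset[OF wf_measure[of atoms]]) (auto dest: s_step_atoms_less)

theorem mainTheorem8:
  shows "\<not> (\<exists>f :: nat \<Rightarrow> lterm. \<forall>i. wf_lterm (f i) \<and> f i \<rightarrow>\<^sub>s f (Suc i))"
  using wf_s_step unfolding wf_iff_no_infinite_down_chain by blast

end
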